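(* Let $K_1,\dots,K_m\subset\mathbb{R}^n$ be closed sets, all super-regular at $x^*\in K:=\bigcap_{l=1}^mK_l$, and suppose the local metric inequality holds at $x^*$: there are $\beta\ge1$ and a neighborhood $V_1$ of $x^*$ with $d(x,K)\le\beta\max_{1\le l\le m}d(x,K_l)$ for all $x\in V_1$. Let $$\rho:=\frac{\sqrt{\beta^2-(1-\tau)^2}}{\beta},\qquad L:=\frac{\beta}{1-\rho}.$$ Then for any $\tau\in(0,1)$ there is a neighborhood $U$ of $x^*$ such that for any $x_0\in U$ and any positive integer $\bar p$, the local super-regular SHQP algorithm (described in the context) with $\tau_i=\tau$ for all $i$ generates a sequence $\{x_i\}$ converging to some $\bar x\in K\cap V_1$ with $$\|x_{i+1}-\bar x\|\le\|x_i-\bar x\|\ \text{ and }\ \|x_i-\bar x\|\le L\max_{l\in\{1,\dots,m\}}d(x_i,K_l)\quad\text{for all }i\ge0.$$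
   Context: For a closed set $C\subset\mathbb{R}^n$ and $\bar x\in C$, the regular normal cone is $\hat N_C(\bar x)=\{y:\langle y,x-\bar x\rangle\le o(\|x-\bar x\|)\text{ for all }x\in C\}$ and the limiting normal cone $N_C(\bar x)$ is the set of $y$ for which there exist $x_i\to\bar x$ with $x_i\in C$ and $y_i\in\hat N_C(x_i)$ with $y_i\to y$. $C$ is super-regular at $\bar x\in C$ if for every $\delta>0$ there is a neighborhood $V$ of $\bar x$ such that $\langle z-y,v\rangle\le\delta\|z-y\|\|v\|$ for all $z,y\in C\cap V$ and $v\in N_C(y)$. $P_C(x)$ denotes the set of nearest points of $C$ to $x$. Local super-regular SHQP algorithm (parameters: a positive integer $\bar p$ and numbers $\tau_i\in[0,1)$): starting from $x_0$, for $i=1,2,\dots$: choose $\bar j_i\in\arg\max_j d(x_{i-1},K_j)$; pick $x_i^{(\bar j_i)}\in P_{K_{\bar j_i}}(x_{i-1})$; set $a_i=x_{i-1}-x_i^{(\bar j_i)}$ and $b_i=\langle a_i,(1-\tau_i)x_i^{(\bar j_i)}+\tau_ix_{i-1}\rangle$; let $\tilde F_i=\{x:\langle a_l,x\rangle\le b_l\text{ for }\max(1,i-\bar p)\le l\le i\}$ and $x_i=P_{\tilde F_i}(x_{i-1})$. *)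

theory Defs
  imports "HOL-Analysis.Analysis"
begin

definition regular_normal_cone :: "'a::euclidean_space set \<Rightarrow> 'a \<Rightarrow> 'a set" where
  "regular_normal_cone C xb =
     {y. \<forall>e>0. \<exists>d>0. \<forall>x\<in>C. norm (x - xb) < d \<longrightarrow> inner y (x - xb) \<le> e * norm (x - xb)}"

definition limiting_normal_cone :: "'a::euclidean_space set \<Rightarrow> 'a \<Rightarrow> 'a set" where
  "limiting_normal_cone C xb =
     {y. \<exists>xs ys. (\<forall>i. xs i \<in> C \<and> ys i \<in> regular_normal_cone C (xs i))
                 \<and> xs \<longlonglongrightarrow> xb \<and> ys \<longlonglongrightarrow> y}"

definition super_regular :: "'a::euclidean_space set \<Rightarrow> 'a \<Rightarrow> bool" where
  "super_regular C xb \<longleftrightarrow> xb \<in> C \<and>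
     (\<forall>\<delta>>0. \<exists>V. open V \<and> xb \<in> V \<and>
        (\<forall>z\<in>C \<inter> V. \<forall>y\<in>C \<inter> V. \<forall>v\<in>limiting_normal_cone C y.
            inner (z - y) v \<le> \<delta> * norm (z - y) * norm v))"

definition proj :: "'a::euclidean_space set \<Rightarrow> 'a \<Rightarrow> 'a set" where
  "proj C x = {y \<in> C. \<forall>z\<in>C. dist x y \<le> dist x z}"

text \<open>Halfspace data of the algorithm: a_i and b_i, built from the iterates x and
  the chosen projection points xp (xp i = x_i^{(jbar_i)}).\<close>
definition shqp_a :: "(nat \<Rightarrow> 'a::euclidean_space) \<Rightarrow> (nat \<Rightarrow> 'a) \<Rightarrow> nat \<Rightarrow> 'a" where
  "shqp_a x xp i = x (i - 1) - xp i"

definition shqp_b :: "(nat \<Rightarrow> real) \<Rightarrow> (nat \<Rightarrow> 'a::euclidean_space) \<Rightarrow> (nat \<Rightarrow> 'a) \<Rightarrow> nat \<Rightarrow> real" where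
  "shqp_b \<tau> x xp i = inner (shqp_a x xp i) ((1 - \<tau> i) *\<^sub>R xp i + \<tau> i *\<^sub>R x (i - 1))"

definition shqp_F :: "nat \<Rightarrow> (nat \<Rightarrow> real) \<Rightarrow> (nat \<Rightarrow> 'a::euclidean_space) \<Rightarrow> (nat \<Rightarrow> 'a) \<Rightarrow> nat \<Rightarrow> 'a set" where
  "shqp_F p \<tau> x xp i =
     {z. \<forall>l. max 1 (i - p) \<le> l \<and> l \<le> i \<longrightarrow> inner (shqp_a x xp l) z \<le> shqp_b \<tau> x xp l}"

text \<open>A run of the local super-regular SHQP algorithm for sets K 1, ..., K m,
  parameter p (= pbar), parameters tau, starting point x0: iterates x,
  chosen indices jb and chosen projection points xp (all choices arbitrary
  among the admissible ones).\<close>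
definition shqp_run ::
  "(nat \<Rightarrow> 'a::euclidean_space set) \<Rightarrow> nat \<Rightarrow> nat \<Rightarrow> (nat \<Rightarrow> real) \<Rightarrow> 'a
     \<Rightarrow> (nat \<Rightarrow> 'a) \<Rightarrow> (nat \<Rightarrow> nat) \<Rightarrow> (nat \<Rightarrow> 'a) \<Rightarrow> bool" where
  "shqp_run K m p \<tau> x0 x jb xp \<longleftrightarrow> x 0 = x0 \<and>
     (\<forall>i\<ge>1.
        jb i \<in> {1..m} \<and>
        (\<forall>j\<in>{1..m}. infdist (x (i - 1)) (K j) \<le> infdist (x (i - 1)) (K (jb i))) \<and>
        xp i \<in> proj (K (jb i)) (x (i - 1)) \<and>
        x i \<in> proj (shqp_F p \<tau> x xp i) (x (i - 1)))"

end

(* Write d k for the distance from x k to K = \<Inter> K l and z for a nearest point of K to x k.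
   Near xs super-regularity, with a constant \<delta> small against \<tau>, makes each of the last
   p cuts contain z, because the telescoping bound norm (x k - x j) \<le> (d j - d k) / (1 - \<rho>)
   keeps z within (L + 1) norm (a l) of the anchor xp l of cut l.  So the projection x (k + 1)
   onto the polyhedron moves towards z, and Pythagoras together with the step length
   (1 - \<tau>) norm (a (k + 1)) \<ge> (1 - \<tau>) d k / \<beta> (metric inequality) gives d (k + 1) \<le> \<rho> d k.
   Hence the steps norm (x (k + 1) - x k) \<le> d k telescope geometrically: the iterates stay
   near xs and converge to some xbar \<in> K with norm (x k - xbar) \<le> d k / (1 - \<rho>), and
   since xbar lies in every later polyhedron the sequence is Fejer monotone with respect to it. *)

theory Submission
  imports Defs
begin

lemma nearest_point_convex_inner_le:
  fixes S :: "'a::euclidean_space set"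
  assumes "convex S" "y \<in> proj S x" "z \<in> S"
  shows "inner (x - y) (z - y) \<le> 0"
proof (rule ccontr)
  assume "\<not> ?thesis"
  then obtain u where u: "0 < u" "u \<le> 1" "dist (y + u *\<^sub>R (z - y)) x < dist y x"
    using closer_point_lemma[of x y z] by auto
  have "(1 - u) *\<^sub>R y + u *\<^sub>R z \<in> S"
    using assms u convexD_alt[OF assms(1), of y z u] by (auto simp: proj_def)
  with assms(2) u(3) show False
    by (force simp: proj_def dist_commute algebra_simps)
qed

lemma proj_convex_pythagoras:
  fixes S :: "'a::euclidean_space set"
  assumes "convex S" "y \<in> proj S x" "z \<in> S"
  shows "(norm (y - z))\<^sup>2 \<le> (norm (x - z))\<^sup>2 - (norm (x - y))\<^sup>2"
proof -
  have "(norm (x - z))\<^sup>2 = (norm (x - y))\<^sup>2 - 2 * inner (x - y) (z - y) + (norm (z - y))\<^sup>2"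
    using arg_cong[of "x - z" "(x - y) - (z - y)" "\<lambda>v. (norm v)\<^sup>2"]
    by (simp add: power2_norm_eq_inner inner_diff_left inner_diff_right inner_commute)
  with nearest_point_convex_inner_le[OF assms] show ?thesis
    by (simp add: norm_minus_commute)
qed

lemma infdist_eq_dist_proj:
  assumes "y \<in> proj C x"
  shows "infdist x C = dist x y"
proof (rule antisym)
  show "infdist x C \<le> dist x y" using assms by (simp add: proj_def infdist_le)
  show "dist x y \<le> infdist x C"
    using assms unfolding proj_def infdist_def by (auto intro: cINF_greatest)
qed

lemma proj_in_limiting_normal_cone:
  fixes C :: "'a::euclidean_space set"
  assumes "y \<in> proj C x"
  shows "x - y \<in> limiting_normal_cone C y"
proof -
  have "x - y \<in> regular_normal_cone C y"
    unfolding regular_normal_cone_def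
  proof (intro CollectI allI impI)
    fix e :: real assume e: "0 < e"
    show "\<exists>d>0. \<forall>z\<in>C. norm (z - y) < d \<longrightarrow> inner (x - y) (z - y) \<le> e * norm (z - y)"
    proof (intro exI[of _ "2 * e"] conjI ballI impI)
      show "0 < 2 * e" using e by simp
    next
      fix z assume z: "z \<in> C" "norm (z - y) < 2 * e"
      have "(norm (x - y))\<^sup>2 \<le> (norm ((x - y) - (z - y)))\<^sup>2"
        using assms z(1) by (simp add: proj_def dist_norm)
      then have "2 * inner (x - y) (z - y) \<le> (norm (z - y))\<^sup>2"
        by (simp add: power2_norm_eq_inner inner_diff_left inner_diff_right inner_commute)
      also have "\<dots> \<le> norm (z - y) * (2 * e)"
        using z(2) unfolding power2_eq_square by (intro mult_left_mono) auto
      finally show "inner (x - y) (z - y) \<le> e * norm (z - y)" by (simp add: mult.commute)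
    qed
  qed
  moreover have "y \<in> C" using assms by (simp add: proj_def)
  ultimately show ?thesis
    unfolding limiting_normal_cone_def by (intro CollectI exI[of _ "\<lambda>_. y"] exI[of _ "\<lambda>_. x - y"]) auto
qed

lemma convex_shqp_F: "convex (shqp_F p \<tau> x xp i)"
  unfolding convex_def shqp_F_def by (auto simp: inner_add_right intro!: convex_bound_le)

lemma shqp_b_eq: "shqp_b \<tau> x xp i = inner (shqp_a x xp i) (xp i) + \<tau> i * (norm (shqp_a x xp i))\<^sup>2"
  unfolding shqp_b_def shqp_a_def power2_norm_eq_inner
  by (simp add: algebra_simps inner_diff_right inner_add_right inner_commute)

lemma halfspace_step_lower_bound:
  fixes x y z :: "'a::real_inner"
  assumes "inner (x - z) y \<le> inner (x - z) z + t * (norm (x - z))\<^sup>2"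
  shows "(1 - t) * norm (x - z) \<le> norm (x - y)"
proof (cases "x = z")
  case False
  have "(1 - t) * (norm (x - z))\<^sup>2 \<le> inner (x - z) (x - y)"
    using assms by (simp add: power2_norm_eq_inner inner_diff_right algebra_simps)
  also have "\<dots> \<le> norm (x - z) * norm (x - y)" by (rule norm_cauchy_schwarz)
  finally show ?thesis using False by (simp add: power2_eq_square mult.assoc)
qed simp

lemma contraction_from_pythagoras:
  fixes \<beta> \<tau> \<rho> d d' s :: real
  assumes "0 < \<beta>" "\<tau> \<le> 1" "0 \<le> \<rho>" "\<rho>\<^sup>2 = 1 - ((1 - \<tau>) / \<beta>)\<^sup>2"
    and "0 \<le> d" "(1 - \<tau>) * d \<le> \<beta> * s" "d'\<^sup>2 \<le> d\<^sup>2 - s\<^sup>2"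
  shows "d' \<le> \<rho> * d"
proof -
  have "0 \<le> (1 - \<tau>) / \<beta> * d" using assms(1,2,5) by simp
  moreover have "(1 - \<tau>) / \<beta> * d \<le> s" using assms(1,6) by (simp add: pos_divide_le_eq mult.commute)
  ultimately have "((1 - \<tau>) / \<beta> * d)\<^sup>2 \<le> s\<^sup>2" by (rule power_mono[rotated])
  with assms(7) have "d'\<^sup>2 \<le> d\<^sup>2 - ((1 - \<tau>) / \<beta> * d)\<^sup>2" by linarith
  also have "\<dots> = (\<rho> * d)\<^sup>2"
    unfolding power_mult_distrib assms(4) by (simp add: algebra_simps)
  finally show ?thesis by (rule power2_le_imp_le) (use assms(3,5) in simp)
qed

lemma norm_diff_le_telescoping:
  fixes x :: "nat \<Rightarrow> 'a::real_normed_vector"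
  assumes "\<And>k. j \<le> k \<Longrightarrow> k < n \<Longrightarrow> norm (x (Suc k) - x k) \<le> c k - c (Suc k)" "j \<le> n"
  shows "norm (x n - x j) \<le> c j - c n"
  using assms
proof (induction n)
  case (Suc n)
  show ?case
  proof (cases "j = Suc n")
    case False
    then have "norm (x n - x j) \<le> c j - c n" using Suc by simp
    moreover have "norm (x (Suc n) - x n) \<le> c n - c (Suc n)" using Suc False by simp
    ultimately show ?thesis using norm_diff_triangle_le[of "x (Suc n)" "x n"] by fastforce
  qed simp
qed simp

lemma convergent_of_telescoping:
  fixes x :: "nat \<Rightarrow> 'a::banach"
  assumes bound: "\<And>j k. j \<le> k \<Longrightarrow> norm (x k - x j) \<le> c j - c k" and "c \<longlonglongrightarrow> 0"
  shows "\<exists>xbar. x \<longlonglongrightarrow> xbar \<and> (\<forall>j. norm (x j - xbar) \<le> c j)"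
proof -
  have dist_le: "dist (x j) (x k) \<le> dist (c j) (c k)" for j k
    using bound[of j k] bound[of k j]
    by (cases "j \<le> k") (auto simp: dist_norm norm_minus_commute)
  have "Cauchy c" using assms(2) by (rule LIMSEQ_imp_Cauchy)
  then have "Cauchy x"
    by (metis (no_types, lifting) dist_le metric_CauchyD metric_CauchyI order.strict_trans1)
  then obtain xbar where xbar: "x \<longlonglongrightarrow> xbar" by (auto simp: Cauchy_convergent_iff convergent_def)
  have "norm (x j - xbar) \<le> c j" for j
  proof -
    have "(\<lambda>k. c j - c k) \<longlonglongrightarrow> c j - 0"
      using assms(2) by (intro tendsto_diff tendsto_const)
    moreover have "(\<lambda>k. norm (x k - x j)) \<longlonglongrightarrow> norm (xbar - x j)"
      using xbar by (intro tendsto_intros)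
    ultimately have "norm (xbar - x j) \<le> c j - 0"
      by (rule tendsto_le[OF sequentially_bot]) (auto simp: eventually_sequentially intro: bound)
    then show ?thesis by (simp add: norm_minus_commute)
  qed
  with xbar show ?thesis by blast
qed

lemma geometric_decay_tendsto_zero:
  fixes d :: "nat \<Rightarrow> real"
  assumes "\<And>k. 0 \<le> d k" "\<And>k. d (Suc k) \<le> \<rho> * d k" "0 \<le> \<rho>" "\<rho> < 1"
  shows "d \<longlonglongrightarrow> 0"
proof (rule tendsto_sandwich[of "\<lambda>_. 0" d sequentially "\<lambda>k. \<rho> ^ k * d 0"])
  have "d k \<le> \<rho> ^ k * d 0" for k
  proof (induction k)
    case (Suc k)
    have "d (Suc k) \<le> \<rho> * d k" by (rule assms(2))
    also have "\<dots> \<le> \<rho> * (\<rho> ^ k * d 0)" using Suc assms(3) by (rule mult_left_mono)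
    finally show ?case by (simp add: mult.assoc)
  qed simp
  then show "\<forall>\<^sub>F k in sequentially. d k \<le> \<rho> ^ k * d 0" by simp
  show "(\<lambda>k. \<rho> ^ k * d 0) \<longlonglongrightarrow> 0"
    using assms(3,4) by (intro tendsto_mult_left_zero LIMSEQ_power_zero) simp
qed (use assms(1) in simp_all)

lemma super_regular_uniform_ball:
  assumes "finite I" "\<forall>l\<in>I. super_regular (K l) xs" "0 < \<delta>" "open V" "xs \<in> V"
  obtains r where "0 < r" "cball xs r \<subseteq> V"
    "\<forall>l\<in>I. \<forall>z\<in>K l \<inter> cball xs r. \<forall>y\<in>K l \<inter> cball xs r. \<forall>v\<in>limiting_normal_cone (K l) y.
       inner (z - y) v \<le> \<delta> * norm (z - y) * norm v"
proof -
  have "\<forall>l\<in>I. \<exists>W. open W \<and> xs \<in> W \<and>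
      (\<forall>z\<in>K l \<inter> W. \<forall>y\<in>K l \<inter> W. \<forall>v\<in>limiting_normal_cone (K l) y.
         inner (z - y) v \<le> \<delta> * norm (z - y) * norm v)"
    using assms(2,3) unfolding super_regular_def by blast
  then obtain W where W: "\<forall>l\<in>I. open (W l) \<and> xs \<in> W l \<and>
      (\<forall>z\<in>K l \<inter> W l. \<forall>y\<in>K l \<inter> W l. \<forall>v\<in>limiting_normal_cone (K l) y.
         inner (z - y) v \<le> \<delta> * norm (z - y) * norm v)"
    by metis
  have "open (V \<inter> (\<Inter>l\<in>I. W l))" "xs \<in> V \<inter> (\<Inter>l\<in>I. W l)"
    using assms W by auto
  then obtain r where "0 < r" "cball xs r \<subseteq> V \<inter> (\<Inter>l\<in>I. W l)"
    by (meson open_contains_cball)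
  with W show thesis by (intro that) blast+
qed

lemma mem_cball_half_radius: "y \<in> cball c (r / 2) \<Longrightarrow> y \<in> cball c r"
  unfolding mem_cball using zero_le_dist[of c y] by linarith

text \<open>A run of the algorithm started close to \<open>xs\<close>, on a ball \<open>cball xs r\<close> where the metric
  inequality holds and super-regularity holds with a constant \<open>\<delta>\<close> satisfying
  \<open>\<delta> (L + 1) \<le> \<tau>\<close>; the condition \<open>start\<close> keeps the whole run inside \<open>cball xs (r / 2)\<close>.\<close>
locale shqp_local_run =
  fixes K :: "nat \<Rightarrow> 'a::euclidean_space set" and m :: nat and xs :: 'a
    and \<beta> \<tau> \<rho> \<delta> r :: real and p :: nat
    and x :: "nat \<Rightarrow> 'a" and jb :: "nat \<Rightarrow> nat" and xp :: "nat \<Rightarrow> 'a"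
  assumes closed_K: "\<And>l. l \<in> {1..m} \<Longrightarrow> closed (K l)"
    and xs_in_K: "xs \<in> (\<Inter>l\<in>{1..m}. K l)"
    and beta_pos: "0 < \<beta>" and tau_le: "\<tau> \<le> 1"
    and rho_nonneg: "0 \<le> \<rho>" and rho_less: "\<rho> < 1"
    and rho_square: "\<rho>\<^sup>2 = 1 - ((1 - \<tau>) / \<beta>)\<^sup>2"
    and delta_nonneg: "0 \<le> \<delta>" and delta_le: "\<delta> * (\<beta> / (1 - \<rho>) + 1) \<le> \<tau>"
    and metric_ineq: "\<And>y. y \<in> cball xs r \<Longrightarrow>
      infdist y (\<Inter>l\<in>{1..m}. K l) \<le> \<beta> * Max ((\<lambda>l. infdist y (K l)) ` {1..m})"
    and super_regular_ineq: "\<And>l z y v. l \<in> {1..m} \<Longrightarrow> z \<in> K l \<inter> cball xs r \<Longrightarrow>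
      y \<in> K l \<inter> cball xs r \<Longrightarrow> v \<in> limiting_normal_cone (K l) y \<Longrightarrow>
      inner (z - y) v \<le> \<delta> * norm (z - y) * norm v"
    and run: "shqp_run K m p (\<lambda>_. \<tau>) (x 0) x jb xp"
    and start: "(1 + 1 / (1 - \<rho>)) * norm (x 0 - xs) \<le> r / 2"
begin

definition Kcap :: "'a set" where "Kcap = (\<Inter>l\<in>{1..m}. K l)"

definition dist_Kcap :: "nat \<Rightarrow> real" where "dist_Kcap k = infdist (x k) Kcap"

abbreviation a :: "nat \<Rightarrow> 'a" where "a \<equiv> shqp_a x xp"

lemma closed_Kcap: "closed Kcap"
  unfolding Kcap_def using closed_K by (intro closed_INT) auto

lemma xs_in_Kcap: "xs \<in> Kcap"
  unfolding Kcap_def using xs_in_K .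

lemma dist_Kcap_nonneg: "0 \<le> dist_Kcap k"
  by (simp add: dist_Kcap_def infdist_nonneg)

lemma dist_Kcap_le: "dist_Kcap k \<le> norm (x k - xs)"
  using infdist_le[OF xs_in_Kcap] by (simp add: dist_Kcap_def dist_norm)

lemma run_step:
  assumes "1 \<le> i"
  shows "jb i \<in> {1..m}"
    and "\<And>l. l \<in> {1..m} \<Longrightarrow> infdist (x (i - 1)) (K l) \<le> infdist (x (i - 1)) (K (jb i))"
    and "xp i \<in> proj (K (jb i)) (x (i - 1))"
    and "x i \<in> proj (shqp_F p (\<lambda>_. \<tau>) x xp i) (x (i - 1))"
  using run assms unfolding shqp_run_def by auto

lemma norm_a_eq_Max:
  assumes "1 \<le> i"
  shows "norm (a i) = Max ((\<lambda>l. infdist (x (i - 1)) (K l)) ` {1..m})"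
proof -
  have "Max ((\<lambda>l. infdist (x (i - 1)) (K l)) ` {1..m}) = infdist (x (i - 1)) (K (jb i))"
    using run_step[OF assms] by (intro Max_eqI) auto
  also have "\<dots> = norm (a i)"
    using infdist_eq_dist_proj[OF run_step(3)[OF assms]] by (simp add: shqp_a_def dist_norm)
  finally show ?thesis ..
qed

lemma dist_Kcap_le_norm_a:
  assumes "1 \<le> i" "x (i - 1) \<in> cball xs r"
  shows "dist_Kcap (i - 1) \<le> \<beta> * norm (a i)"
  using metric_ineq[OF assms(2)] norm_a_eq_Max[OF assms(1)]
  by (simp add: dist_Kcap_def Kcap_def)

text \<open>Since \<open>a l\<close> is normal to \<open>K (jb l)\<close> at \<open>xp l\<close>, super-regularity bounds the amount by
  which a point of \<open>K\<close> near \<open>xp l\<close> can lie beyond the cut through \<open>xp l\<close>; the shift of the cut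
  by \<open>\<tau> norm (a l)\<^sup>2\<close> absorbs it.\<close>
lemma in_halfspace:
  assumes "1 \<le> l" "z \<in> Kcap" "z \<in> cball xs r" "x (l - 1) \<in> cball xs (r / 2)"
    and "norm (z - x (l - 1)) \<le> dist_Kcap (l - 1) / (1 - \<rho>)"
  shows "inner (a l) z \<le> shqp_b (\<lambda>_. \<tau>) x xp l"
proof -
  let ?j = "jb l" and ?y = "x (l - 1)"
  have j: "?j \<in> {1..m}" and xp: "xp l \<in> proj (K ?j) ?y" using run_step[OF assms(1)] by auto
  then have "xp l \<in> K ?j" "dist ?y (xp l) \<le> dist ?y xs"
    using xs_in_K by (auto simp: proj_def)
  moreover have "dist xs ?y \<le> r / 2" using assms(4) by simp
  ultimately have xp_ball: "xp l \<in> K ?j \<inter> cball xs r"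
    using dist_triangle[of xs "xp l" ?y] by (simp add: dist_commute)
  have z_ball: "z \<in> K ?j \<inter> cball xs r" using assms(2,3) j by (auto simp: Kcap_def)
  have normal: "a l \<in> limiting_normal_cone (K ?j) (xp l)"
    using proj_in_limiting_normal_cone[OF xp] by (simp add: shqp_a_def)
  have "dist_Kcap (l - 1) / (1 - \<rho>) \<le> \<beta> * norm (a l) / (1 - \<rho>)"
    using dist_Kcap_le_norm_a[OF assms(1) mem_cball_half_radius[OF assms(4)]] rho_less
    by (intro divide_right_mono) auto
  moreover have "norm (z - xp l) \<le> norm (z - ?y) + norm (a l)"
    using norm_diff_triangle_le[of z ?y] by (simp add: shqp_a_def)
  ultimately have near: "norm (z - xp l) \<le> (\<beta> / (1 - \<rho>) + 1) * norm (a l)"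
    using assms(5) by (simp add: algebra_simps)
  have "inner (z - xp l) (a l) \<le> \<delta> * norm (z - xp l) * norm (a l)"
    by (rule super_regular_ineq[OF j z_ball xp_ball normal])
  also have "\<dots> \<le> \<delta> * ((\<beta> / (1 - \<rho>) + 1) * norm (a l)) * norm (a l)"
    using near delta_nonneg by (intro mult_right_mono mult_left_mono) auto
  also have "\<dots> \<le> \<tau> * (norm (a l))\<^sup>2"
    using delta_le by (simp add: power2_eq_square mult_right_mono flip: mult.assoc)
  finally show ?thesis
    by (simp add: shqp_b_eq inner_diff_right inner_commute)
qed

lemma in_shqp_F:
  assumes "z \<in> Kcap" "z \<in> cball xs r"
    and "\<And>l. 1 \<le> l \<Longrightarrow> l \<le> i \<Longrightarrow>
      x (l - 1) \<in> cball xs (r / 2) \<and> norm (z - x (l - 1)) \<le> dist_Kcap (l - 1) / (1 - \<rho>)"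
  shows "z \<in> shqp_F p (\<lambda>_. \<tau>) x xp i"
  using in_halfspace assms unfolding shqp_F_def by auto

lemma step_length_lower_bound: "(1 - \<tau>) * norm (a (Suc n)) \<le> norm (x n - x (Suc n))"
proof -
  have "x (Suc n) \<in> shqp_F p (\<lambda>_. \<tau>) x xp (Suc n)"
    using run_step(4)[of "Suc n"] by (simp add: proj_def)
  then have "inner (a (Suc n)) (x (Suc n)) \<le> shqp_b (\<lambda>_. \<tau>) x xp (Suc n)"
    unfolding shqp_F_def by auto
  moreover have "a (Suc n) = x n - xp (Suc n)" by (simp add: shqp_a_def)
  ultimately show ?thesis
    by (metis halfspace_step_lower_bound shqp_b_eq)
qed

lemma contraction_step:
  assumes ball: "\<And>k. k \<le> n \<Longrightarrow> x k \<in> cball xs (r / 2)"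
    and tele: "\<And>j. j \<le> n \<Longrightarrow> norm (x n - x j) \<le> (dist_Kcap j - dist_Kcap n) / (1 - \<rho>)"
  shows "norm (x (Suc n) - x n) \<le> dist_Kcap n" and "dist_Kcap (Suc n) \<le> \<rho> * dist_Kcap n"
proof -
  obtain z where z: "z \<in> Kcap" "dist_Kcap n = dist (x n) z"
    using infdist_attains_inf[OF closed_Kcap, of "x n"] xs_in_Kcap
    by (auto simp: dist_Kcap_def)
  have "norm (z - xs) \<le> norm (z - x n) + norm (x n - xs)"
    by (rule norm_diff_triangle_le) auto
  moreover have "norm (z - x n) \<le> norm (x n - xs)"
    using z(2) dist_Kcap_le[of n] by (simp add: dist_norm norm_minus_commute)
  moreover have "norm (x n - xs) \<le> r / 2"
    using ball[of n] by (simp add: dist_norm norm_minus_commute)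
  ultimately have z_ball: "z \<in> cball xs r" by (simp add: dist_norm norm_minus_commute)
  have z_F: "z \<in> shqp_F p (\<lambda>_. \<tau>) x xp (Suc n)"
  proof (rule in_shqp_F[OF z(1) z_ball])
    fix l assume l: "1 \<le> l" "l \<le> Suc n"
    have "dist_Kcap n \<le> dist_Kcap n / (1 - \<rho>)"
      using dist_Kcap_nonneg[of n] rho_nonneg rho_less by (simp add: le_divide_eq mult_left_le)
    moreover have "norm (z - x (l - 1)) \<le> norm (z - x n) + norm (x n - x (l - 1))"
      by (rule norm_diff_triangle_le) auto
    moreover have "l - 1 \<le> n" using l by simp
    ultimately have "norm (z - x (l - 1)) \<le> dist_Kcap (l - 1) / (1 - \<rho>)"
      using tele[of "l - 1"] z(2)
      by (simp add: dist_norm norm_minus_commute diff_divide_distrib)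
    then show "x (l - 1) \<in> cball xs (r / 2) \<and> norm (z - x (l - 1)) \<le> dist_Kcap (l - 1) / (1 - \<rho>)"
      using ball[of "l - 1"] l by simp
  qed
  have step: "x (Suc n) \<in> proj (shqp_F p (\<lambda>_. \<tau>) x xp (Suc n)) (x n)"
    using run_step(4)[of "Suc n"] by simp
  then have "norm (x n - x (Suc n)) \<le> dist_Kcap n"
    using z_F z(2) by (auto simp: proj_def dist_norm)
  then show "norm (x (Suc n) - x n) \<le> dist_Kcap n" by (simp add: norm_minus_commute)
  have pyth: "(norm (x (Suc n) - z))\<^sup>2 \<le> (dist_Kcap n)\<^sup>2 - (norm (x n - x (Suc n)))\<^sup>2"
    using proj_convex_pythagoras[OF convex_shqp_F step z_F] z(2) by (simp add: dist_norm)
  have "dist_Kcap (Suc n) \<le> norm (x (Suc n) - z)"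
    using infdist_le[OF z(1)] by (simp add: dist_Kcap_def dist_norm)
  then have "(dist_Kcap (Suc n))\<^sup>2 \<le> (norm (x (Suc n) - z))\<^sup>2"
    using dist_Kcap_nonneg by (intro power_mono) auto
  moreover have "(1 - \<tau>) * dist_Kcap n \<le> \<beta> * norm (x n - x (Suc n))"
  proof -
    have "(1 - \<tau>) * dist_Kcap n \<le> (1 - \<tau>) * (\<beta> * norm (a (Suc n)))"
      using dist_Kcap_le_norm_a[of "Suc n"] mem_cball_half_radius[OF ball[of n]] tau_le
      by (intro mult_left_mono) auto
    also have "\<dots> = \<beta> * ((1 - \<tau>) * norm (a (Suc n)))" by simp
    also have "\<dots> \<le> \<beta> * norm (x n - x (Suc n))"
      using step_length_lower_bound[of n] beta_pos by (intro mult_left_mono) auto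
    finally show ?thesis .
  qed
  ultimately show "dist_Kcap (Suc n) \<le> \<rho> * dist_Kcap n"
    using pyth by (intro contraction_from_pythagoras[OF beta_pos tau_le rho_nonneg rho_square
      dist_Kcap_nonneg]) auto
qed

lemma telescoping_of_contractions:
  assumes "\<And>k. k < n \<Longrightarrow>
      norm (x (Suc k) - x k) \<le> dist_Kcap k \<and> dist_Kcap (Suc k) \<le> \<rho> * dist_Kcap k"
    and "j \<le> k" "k \<le> n"
  shows "norm (x k - x j) \<le> (dist_Kcap j - dist_Kcap k) / (1 - \<rho>)"
  unfolding diff_divide_distrib
proof (rule norm_diff_le_telescoping[OF _ assms(2)])
  fix i assume "i < k"
  then have "norm (x (Suc i) - x i) \<le> dist_Kcap i" "dist_Kcap (Suc i) \<le> \<rho> * dist_Kcap i"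
    using assms(1,3) by auto
  moreover have "dist_Kcap i \<le> (dist_Kcap i - dist_Kcap (Suc i)) / (1 - \<rho>)"
    using calculation(2) rho_less by (simp add: le_divide_eq algebra_simps)
  ultimately show "norm (x (Suc i) - x i) \<le> dist_Kcap i / (1 - \<rho>) - dist_Kcap (Suc i) / (1 - \<rho>)"
    by (simp add: diff_divide_distrib)
qed

lemma cball_of_contractions:
  assumes "\<And>k. k < n \<Longrightarrow>
      norm (x (Suc k) - x k) \<le> dist_Kcap k \<and> dist_Kcap (Suc k) \<le> \<rho> * dist_Kcap k"
    and "k \<le> n"
  shows "x k \<in> cball xs (r / 2)"
proof -
  have "norm (x k - x 0) \<le> (dist_Kcap 0 - dist_Kcap k) / (1 - \<rho>)"
    using telescoping_of_contractions[OF assms(1) _ assms(2)] by simp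
  also have "\<dots> \<le> dist_Kcap 0 / (1 - \<rho>)"
    using dist_Kcap_nonneg[of k] rho_less by (intro divide_right_mono) auto
  also have "\<dots> \<le> norm (x 0 - xs) / (1 - \<rho>)"
    using dist_Kcap_le[of 0] rho_less by (simp add: divide_right_mono)
  finally have "norm (x k - x 0) \<le> norm (x 0 - xs) / (1 - \<rho>)" .
  moreover have "norm (x k - xs) \<le> norm (x k - x 0) + norm (x 0 - xs)"
    by (rule norm_diff_triangle_le) auto
  ultimately have "norm (x k - xs) \<le> (1 + 1 / (1 - \<rho>)) * norm (x 0 - xs)"
    by (simp add: algebra_simps)
  with start have "norm (x k - xs) \<le> r / 2" by linarith
  then show ?thesis by (simp add: dist_norm norm_minus_commute)
qed

lemma contractions:
  "norm (x (Suc k) - x k) \<le> dist_Kcap k" "dist_Kcap (Suc k) \<le> \<rho> * dist_Kcap k"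
proof -
  have "\<forall>k<n. norm (x (Suc k) - x k) \<le> dist_Kcap k \<and> dist_Kcap (Suc k) \<le> \<rho> * dist_Kcap k" for n
  proof (induction n)
    case (Suc n)
    then have "norm (x (Suc n) - x n) \<le> dist_Kcap n \<and> dist_Kcap (Suc n) \<le> \<rho> * dist_Kcap n"
      using contraction_step cball_of_contractions telescoping_of_contractions by blast
    with Suc show ?case using less_Suc_eq by auto
  qed simp
  then show "norm (x (Suc k) - x k) \<le> dist_Kcap k" "dist_Kcap (Suc k) \<le> \<rho> * dist_Kcap k"
    by blast+
qed

lemma converges_in_Kcap:
  obtains xbar where "xbar \<in> (\<Inter>l\<in>{1..m}. K l)" "xbar \<in> cball xs r" "x \<longlonglongrightarrow> xbar"
    "\<And>i. norm (x (Suc i) - xbar) \<le> norm (x i - xbar)"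
    "\<And>i. norm (x i - xbar) \<le> \<beta> / (1 - \<rho>) * Max ((\<lambda>l. infdist (x i) (K l)) ` {1..m})"
proof -
  have ball: "x k \<in> cball xs (r / 2)" for k
    using cball_of_contractions contractions by blast
  have "dist_Kcap \<longlonglongrightarrow> 0"
    using dist_Kcap_nonneg contractions(2) rho_nonneg rho_less by (rule geometric_decay_tendsto_zero)
  then have lim_c: "(\<lambda>k. dist_Kcap k / (1 - \<rho>)) \<longlonglongrightarrow> 0"
    by (rule tendsto_divide_zero)
  have "norm (x k - x j) \<le> dist_Kcap j / (1 - \<rho>) - dist_Kcap k / (1 - \<rho>)" if "j \<le> k" for j k
    using telescoping_of_contractions[OF _ that order.refl] contractions
    by (simp add: diff_divide_distrib)
  from convergent_of_telescoping[OF this lim_c] obtain xbar where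
    lim: "x \<longlonglongrightarrow> xbar" and bound: "\<And>j. norm (x j - xbar) \<le> dist_Kcap j / (1 - \<rho>)"
    by blast
  have "dist_Kcap \<longlonglongrightarrow> infdist xbar Kcap"
    unfolding dist_Kcap_def using lim by (intro tendsto_intros)
  with \<open>dist_Kcap \<longlonglongrightarrow> 0\<close> have "infdist xbar Kcap = 0" using LIMSEQ_unique by metis
  then have xbar_K: "xbar \<in> Kcap"
    using in_closed_iff_infdist_zero[OF closed_Kcap] xs_in_Kcap by blast
  have xbar_ball: "xbar \<in> cball xs r"
    using closed_sequentially[OF closed_cball ball lim] by (rule mem_cball_half_radius)
  show thesis
  proof (rule that[OF xbar_K[unfolded Kcap_def] xbar_ball lim])
    fix i
    have "xbar \<in> shqp_F p (\<lambda>_. \<tau>) x xp (Suc i)"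
      using in_shqp_F[OF xbar_K xbar_ball] ball bound by (simp add: norm_minus_commute)
    from proj_convex_pythagoras[OF convex_shqp_F run_step(4)[of "Suc i", simplified] this]
    have "(norm (x (Suc i) - xbar))\<^sup>2 \<le> (norm (x i - xbar))\<^sup>2"
      using zero_le_power2[of "norm (x i - x (Suc i))"] by linarith
    then show "norm (x (Suc i) - xbar) \<le> norm (x i - xbar)"
      by (rule power2_le_imp_le) simp
    have "dist_Kcap i / (1 - \<rho>) \<le> \<beta> * Max ((\<lambda>l. infdist (x i) (K l)) ` {1..m}) / (1 - \<rho>)"
      using metric_ineq[OF mem_cball_half_radius[OF ball]] rho_less
      by (intro divide_right_mono) (auto simp: dist_Kcap_def Kcap_def)
    with bound[of i] show "norm (x i - xbar) \<le> \<beta> / (1 - \<rho>) * Max ((\<lambda>l. infdist (x i) (K l)) ` {1..m})"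
      by simp
  qed
qed

end

lemma shqp_rate:
  fixes \<beta> \<tau> :: real
  assumes "1 \<le> \<beta>" "0 < \<tau>" "\<tau> < 1"
  defines "\<rho> \<equiv> sqrt (\<beta>\<^sup>2 - (1 - \<tau>)\<^sup>2) / \<beta>"
  shows "0 \<le> \<rho>" "\<rho> < 1" "\<rho>\<^sup>2 = 1 - ((1 - \<tau>) / \<beta>)\<^sup>2"
proof -
  have "(1 - \<tau>)\<^sup>2 \<le> \<beta>\<^sup>2" using assms by (intro power_mono) auto
  then show "0 \<le> \<rho>" "\<rho>\<^sup>2 = 1 - ((1 - \<tau>) / \<beta>)\<^sup>2"
    using assms(1) by (auto simp: \<rho>_def power_divide field_simps)
  have "sqrt (\<beta>\<^sup>2 - (1 - \<tau>)\<^sup>2) < sqrt (\<beta>\<^sup>2)" using assms(3) by (intro real_sqrt_less_mono) simp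
  then show "\<rho> < 1" using assms(1) by (simp add: \<rho>_def)
qed

lemma shqp_local_convergence:
  fixes K :: "nat \<Rightarrow> 'a::euclidean_space set" and \<beta> \<tau> \<rho> :: real
  assumes "\<forall>l\<in>{1..m}. closed (K l)" "xs \<in> (\<Inter>l\<in>{1..m}. K l)"
    and "\<forall>l\<in>{1..m}. super_regular (K l) xs"
    and "\<beta> \<ge> 1" "open V1" "xs \<in> V1"
    and "\<forall>x\<in>V1. infdist x (\<Inter>l\<in>{1..m}. K l) \<le> \<beta> * Max ((\<lambda>l. infdist x (K l)) ` {1..m})"
    and "0 < \<tau>" "\<tau> < 1" "\<rho> = sqrt (\<beta>\<^sup>2 - (1 - \<tau>)\<^sup>2) / \<beta>"
  shows "\<exists>U. open U \<and> xs \<in> U \<and>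
    (\<forall>x0\<in>U. \<forall>p x jb xp. shqp_run K m p (\<lambda>_. \<tau>) x0 x jb xp \<longrightarrow>
       (\<exists>xbar. xbar \<in> (\<Inter>l\<in>{1..m}. K l) \<inter> V1 \<and> x \<longlonglongrightarrow> xbar \<and>
          (\<forall>i. norm (x (Suc i) - xbar) \<le> norm (x i - xbar)) \<and>
          (\<forall>i. norm (x i - xbar) \<le> \<beta> / (1 - \<rho>) * Max ((\<lambda>l. infdist (x i) (K l)) ` {1..m}))))"
proof -
  have \<rho>: "0 \<le> \<rho>" "\<rho> < 1" "\<rho>\<^sup>2 = 1 - ((1 - \<tau>) / \<beta>)\<^sup>2"
    using shqp_rate[of \<beta> \<tau>] assms(4,8,9,10) by auto
  define \<delta> where "\<delta> = \<tau> / (\<beta> / (1 - \<rho>) + 1)"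
  have "0 < \<beta> / (1 - \<rho>)" using assms(4) \<rho>(2) by simp
  with assms(8) have \<delta>: "0 < \<delta>" "\<delta> * (\<beta> / (1 - \<rho>) + 1) \<le> \<tau>" by (simp_all add: \<delta>_def)
  obtain r where r: "0 < r" "cball xs r \<subseteq> V1"
    "\<forall>l\<in>{1..m}. \<forall>z\<in>K l \<inter> cball xs r. \<forall>y\<in>K l \<inter> cball xs r. \<forall>v\<in>limiting_normal_cone (K l) y.
       inner (z - y) v \<le> \<delta> * norm (z - y) * norm v"
    using super_regular_uniform_ball[OF finite_atLeastAtMost assms(3) \<delta>(1) assms(5,6)] by metis
  define s where "s = r / 2 / (1 + 1 / (1 - \<rho>))"
  show ?thesis
  proof (intro exI[of _ "ball xs s"] conjI ballI allI impI)
    show "xs \<in> ball xs s" using r(1) \<rho>(2) by (simp add: s_def add_pos_pos)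
    fix x0 p x jb xp assume x0: "x0 \<in> ball xs s" and run: "shqp_run K m p (\<lambda>_. \<tau>) x0 x jb xp"
    have "shqp_local_run K m xs \<beta> \<tau> \<rho> \<delta> r p x jb xp"
    proof unfold_locales
      show "(1 + 1 / (1 - \<rho>)) * norm (x 0 - xs) \<le> r / 2"
        using run x0 \<rho>(2) by (auto simp: shqp_run_def s_def dist_norm norm_minus_commute field_simps)
    qed (use assms \<rho> \<delta> r run in \<open>auto simp: shqp_run_def\<close>)
    then show "\<exists>xbar. xbar \<in> (\<Inter>l\<in>{1..m}. K l) \<inter> V1 \<and> x \<longlonglongrightarrow> xbar \<and>
        (\<forall>i. norm (x (Suc i) - xbar) \<le> norm (x i - xbar)) \<and>
        (\<forall>i. norm (x i - xbar) \<le> \<beta> / (1 - \<rho>) * Max ((\<lambda>l. infdist (x i) (K l)) ` {1..m}))"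
      using r(2) by (elim shqp_local_run.converges_in_Kcap) blast
  qed simp
qed

theorem lemma5p2:
  fixes K :: "nat \<Rightarrow> 'a::euclidean_space set"
    and m :: nat and xs :: 'a and \<beta> :: real and V1 :: "'a set"
  assumes "m \<ge> 1"
    and "\<forall>l\<in>{1..m}. closed (K l)"
    and "xs \<in> (\<Inter>l\<in>{1..m}. K l)"
    and "\<forall>l\<in>{1..m}. super_regular (K l) xs"
    and "\<beta> \<ge> 1" and "open V1" and "xs \<in> V1"
    and "\<forall>x\<in>V1. infdist x (\<Inter>l\<in>{1..m}. K l)
                  \<le> \<beta> * Max ((\<lambda>l. infdist x (K l)) ` {1..m})"
  shows "\<forall>\<tau>::real. 0 < \<tau> \<and> \<tau> < 1 \<longrightarrow>
     (let \<rho> = sqrt (\<beta>\<^sup>2 - (1 - \<tau>)\<^sup>2) / \<beta>; L = \<beta> / (1 - \<rho>) in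
      \<exists>U. open U \<and> xs \<in> U \<and>
        (\<forall>x0\<in>U. \<forall>p::nat. p \<ge> 1 \<longrightarrow>
          (\<forall>x jb xp. shqp_run K m p (\<lambda>_. \<tau>) x0 x jb xp \<longrightarrow>
             (\<exists>xbar. xbar \<in> (\<Inter>l\<in>{1..m}. K l) \<inter> V1 \<and> x \<longlonglongrightarrow> xbar \<and>
                (\<forall>i. norm (x (Suc i) - xbar) \<le> norm (x i - xbar)) \<and>
                (\<forall>i. norm (x i - xbar) \<le> L * Max ((\<lambda>l. infdist (x i) (K l)) ` {1..m}))))))"
  unfolding Let_def
  by (intro allI impI, elim conjE, rule ex_forward[OF shqp_local_convergence[OF assms(2-8) _ _ refl]])
    blast+

end
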